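(* Consider $n$ birds in $\mathbb{R}^d$ evolving noise-free by $x(t)=x(t-1)+v(t)$, $v(t+1)=(P\otimes I_d)v(t)$, with fixed connected flocking network $G$ and fixed $P=I_n-CL$, where the coordinates of $x(0)$ and $v(1)$ are rationals over $\mathfrak{p}$ bits. Let $\pi=(\mathrm{tr}\,C^{-1})^{-1}C^{-1}\mathbf{1}$, $\Gamma=\lim_{t\to\infty}\bigl(-\mathbf{1}\pi^Tt+\sum_{s=0}^{t-1}P^s\bigr)$ and $x^r=((I_n-\mathbf{1}\pi^T)\otimes I_d)x(0)+(\Gamma\otimes I_d)v(1)$. Then the elements of $\Gamma$ are CD-rationals over $O(n\log n)$ bits and the coordinates of $x^r$ are CD-rationals over $O(n\log n+\mathfrak{p}n)$ bits.
   Context: $G$ is a connected undirected graph without self-loops on $n$ vertices with degrees $d_i$ and Laplacian $L$; $C=\mathrm{diag}(c_1,\dots,c_n)$ with positive rationals $c_i$ of $O(\log n)$ bits and $c_id_i<1$. A set of numbers is CD-rational over $k$ bits if they can be written as $p_i/q$ with a common denominator $q$, all integers involved having $O(k)$ bits. *)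

theory Defs
  imports Complex_Main "Jordan_Normal_Form.Matrix"
begin

definition fits_bits :: "int \<Rightarrow> real \<Rightarrow> bool" where
  "fits_bits z b \<longleftrightarrow> real_of_int \<bar>z\<bar> < 2 powr b"

definition rat_over_bits :: "real \<Rightarrow> real \<Rightarrow> bool" where
  "rat_over_bits x b \<longleftrightarrow> (\<exists>a q::int. q > 0 \<and> fits_bits a b \<and> fits_bits q b \<and> x = of_int a / of_int q)"

text \<open>A set of numbers is CD-rational over b bits: common positive denominator q,
  all integers involved with at most b bits (the O(.) is absorbed into b by the statement).\<close>
definition cd_rational_bits :: "real set \<Rightarrow> real \<Rightarrow> bool" where
  "cd_rational_bits S b \<longleftrightarrow> (\<exists>q::int. q > 0 \<and> fits_bits q b \<and>
      (\<forall>x\<in>S. \<exists>a::int. fits_bits a b \<and> x = of_int a / of_int q))"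

definition undirected_graph :: "nat \<Rightarrow> (nat \<Rightarrow> nat \<Rightarrow> bool) \<Rightarrow> bool" where
  "undirected_graph n E \<longleftrightarrow> (\<forall>i j. E i j \<longrightarrow> E j i) \<and> (\<forall>i. \<not> E i i)"

definition graph_connected :: "nat \<Rightarrow> (nat \<Rightarrow> nat \<Rightarrow> bool) \<Rightarrow> bool" where
  "graph_connected n E \<longleftrightarrow>
     (\<forall>i<n. \<forall>j<n. (\<lambda>a b. a < n \<and> b < n \<and> E a b)\<^sup>*\<^sup>* i j)"

definition degree :: "nat \<Rightarrow> (nat \<Rightarrow> nat \<Rightarrow> bool) \<Rightarrow> nat \<Rightarrow> nat" where
  "degree n E i = card {j. j < n \<and> E i j}"

definition laplacian :: "nat \<Rightarrow> (nat \<Rightarrow> nat \<Rightarrow> bool) \<Rightarrow> real mat" where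
  "laplacian n E = mat n n (\<lambda>(i,j). if i = j then real (degree n E i)
                                    else if E i j then -1 else 0)"

definition diag_mat :: "nat \<Rightarrow> (nat \<Rightarrow> real) \<Rightarrow> real mat" where
  "diag_mat n c = mat n n (\<lambda>(i,j). if i = j then c i else 0)"

definition trans_mat :: "nat \<Rightarrow> (nat \<Rightarrow> nat \<Rightarrow> bool) \<Rightarrow> (nat \<Rightarrow> real) \<Rightarrow> real mat" where
  "trans_mat n E c = 1\<^sub>m n - diag_mat n c * laplacian n E"

definition stat_dist :: "nat \<Rightarrow> (nat \<Rightarrow> real) \<Rightarrow> nat \<Rightarrow> real" where
  "stat_dist n c j = (1 / c j) / (\<Sum>k<n. 1 / c k)"

definition gamma_seq :: "nat \<Rightarrow> (nat \<Rightarrow> nat \<Rightarrow> bool) \<Rightarrow> (nat \<Rightarrow> real) \<Rightarrow> nat \<Rightarrow> nat \<Rightarrow> nat \<Rightarrow> real" where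
  "gamma_seq n E c i j t = - stat_dist n c j * real t
      + (\<Sum>s<t. (trans_mat n E c ^\<^sub>m s) $$ (i,j))"

text \<open>Coordinate (i,k) of x^r = ((I_n - 1 pi^T) \<otimes> I_d) x(0) + (Gamma \<otimes> I_d) v(1), written out.\<close>
definition x_rest :: "nat \<Rightarrow> (nat \<Rightarrow> real) \<Rightarrow> (nat \<Rightarrow> nat \<Rightarrow> real) \<Rightarrow> (nat \<Rightarrow> nat \<Rightarrow> real)
    \<Rightarrow> (nat \<Rightarrow> nat \<Rightarrow> real) \<Rightarrow> nat \<Rightarrow> nat \<Rightarrow> real" where
  "x_rest n c \<Gamma> x0 v1 i k =
     (\<Sum>j<n. ((if i = j then 1 else 0) - stat_dist n c j) * x0 j k)
   + (\<Sum>j<n. \<Gamma> i j * v1 j k)"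

end

theory Submission
  imports Defs "Jordan_Normal_Form.Determinant"
begin

text \<open>For fixed \<open>j\<close> the deviations \<open>z\<^sub>t = P\<^sup>t e\<^sub>j - \<pi>\<^sub>j 1\<close> follow the consensus recursion
  \<open>y \<mapsto> y - C L y\<close> and have mass \<open>\<Sum>\<^sub>i y\<^sub>i / c\<^sub>i = 0\<close>. Because \<open>c\<^sub>i d\<^sub>i < 1\<close>, each step lowers the
  energy \<open>\<Sum>\<^sub>i y\<^sub>i\<^sup>2 / c\<^sub>i\<close> by a positive multiple of every squared edge difference, so on a
  connected graph \<open>z\<^sub>t \<longlonglongrightarrow> 0\<close>. The partial sums \<open>S\<^sub>t = z\<^sub>0 + \<dots> + z\<^sub>t\<^sub>-\<^sub>1\<close> have mass 0 and satisfy
  \<open>C L S\<^sub>t = z\<^sub>0 - z\<^sub>t\<close>; hence column \<open>j\<close> of \<open>\<Gamma>\<close> is the solution of \<open>N \<gamma> = C\<^sup>-\<^sup>1 z\<^sub>0\<close> for the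
  invertible matrix \<open>N = L + 1 (C\<^sup>-\<^sup>1 1)\<^sup>T\<close>.

  Writing \<open>c\<^sub>i = \<alpha>\<^sub>i / \<beta>\<^sub>i\<close> and scaling column \<open>k\<close> of \<open>N\<close> by \<open>\<alpha>\<^sub>k\<close> gives an integer matrix with
  entries \<open>\<alpha>\<^sub>k L\<^sub>i\<^sub>k + \<beta>\<^sub>k\<close> of \<open>O(log n)\<close> bits. Cramer's rule and \<open>|det M| \<le> n! \<Prod>\<^sub>k max\<^sub>i |M\<^sub>i\<^sub>k|\<close>
  put the entries of \<open>\<Gamma>\<close> and of \<open>I - 1 \<pi>\<^sup>T\<close> over one common denominator of \<open>O(n log n)\<close> bits,
  and \<open>x\<^sup>r\<close> combines these with the \<open>p\<close>-bit coordinates of \<open>x(0)\<close> and \<open>v(1)\<close>.\<close>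

hide_const (open) Polynomial.degree

section \<open>Sums, matrices and determinants\<close>

lemma sum_squared_le_card_sum_squares:
  fixes f :: "'a \<Rightarrow> real"
  assumes "finite S"
  shows "(\<Sum>j\<in>S. f j)^2 \<le> real (card S) * (\<Sum>j\<in>S. (f j)^2)"
proof -
  have "0 \<le> (\<Sum>i\<in>S. \<Sum>j\<in>S. (f i - f j)^2)" by (intro sum_nonneg) auto
  also have "\<dots> = (\<Sum>i\<in>S. \<Sum>j\<in>S. (f i)^2) + (\<Sum>i\<in>S. \<Sum>j\<in>S. (f j)^2)
      - 2 * (\<Sum>i\<in>S. \<Sum>j\<in>S. f i * f j)"
    by (simp add: power2_diff sum.distrib sum_subtractf sum_distrib_left mult.assoc)
  also have "(\<Sum>i\<in>S. \<Sum>j\<in>S. f i * f j) = (\<Sum>j\<in>S. f j)^2"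
    by (simp add: power2_eq_square sum_product)
  finally show ?thesis by (simp add: sum_distrib_left[symmetric])
qed

lemma mat_mult_entry_sum:
  assumes "A \<in> carrier_mat n n" "B \<in> carrier_mat n n" "i < n" "j < n"
  shows "(A * B) $$ (i,j) = (\<Sum>k<n. A $$ (i,k) * B $$ (k,j))"
  using assms by (simp add: scalar_prod_def atLeast0LessThan)

lemma mat_vec_entry_sum:
  assumes "A \<in> carrier_mat n n" "v \<in> carrier_vec n" "i < n"
  shows "(A *\<^sub>v v) $ i = (\<Sum>k<n. A $$ (i,k) * v $ k)"
  using assms by (simp add: scalar_prod_def atLeast0LessThan)

lemma mult_mat_vec_sum:
  assumes "A \<in> carrier_mat n n"
  shows "A *\<^sub>v vec n y = vec n (\<lambda>i. \<Sum>k<n. A $$ (i,k) * y k)"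
  using assms by (intro eq_vecI) (auto simp: scalar_prod_def atLeast0LessThan)

lemma pow_mat_Suc_left:
  assumes "A \<in> carrier_mat n n"
  shows "A ^\<^sub>m Suc t = A * A ^\<^sub>m t"
proof (induction t)
  case 0
  then show ?case using assms by simp
next
  case (Suc t)
  have "A ^\<^sub>m Suc (Suc t) = (A * A ^\<^sub>m t) * A" using Suc by simp
  also have "\<dots> = A * (A ^\<^sub>m t * A)" using assms by (intro assoc_mult_mat) auto
  finally show ?case by simp
qed

lemma abs_det_le_fact_prod:
  fixes M :: "real mat"
  assumes M: "M \<in> carrier_mat n n"
    and b: "\<And>i k. i < n \<Longrightarrow> k < n \<Longrightarrow> \<bar>M $$ (i,k)\<bar> \<le> b k"
  shows "\<bar>det M\<bar> \<le> fact n * (\<Prod>k<n. b k)"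
proof -
  let ?P = "{p. p permutes {0..<n}}"
  have term_le: "\<bar>signof p * (\<Prod>i = 0..<n. M $$ (i, p i))\<bar> \<le> (\<Prod>k<n. b k)" if "p \<in> ?P" for p
  proof -
    have p: "p permutes {0..<n}" using that by simp
    have "\<bar>signof p * (\<Prod>i = 0..<n. M $$ (i, p i))\<bar> = (\<Prod>i = 0..<n. \<bar>M $$ (i, p i)\<bar>)"
      by (simp add: abs_mult abs_prod sign_def)
    also have "\<dots> \<le> (\<Prod>i = 0..<n. b (p i))"
      using b permutes_in_image[OF p] by (intro prod_mono) auto
    also have "\<dots> = (\<Prod>k<n. b k)"
      using prod.permute[OF p, of b] by (simp add: comp_def atLeast0LessThan)
    finally show ?thesis .
  qed
  have "\<bar>det M\<bar> \<le> (\<Sum>p\<in>?P. \<bar>signof p * (\<Prod>i = 0..<n. M $$ (i, p i))\<bar>)"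
    unfolding det_def'[OF M] by (rule sum_abs)
  also have "\<dots> \<le> of_nat (card ?P) * (\<Prod>k<n. b k)"
    using term_le by (intro sum_bounded_above) auto
  also have "card ?P = fact n"
    using card_permutations[of "{0..<n}" n] by simp
  finally show ?thesis by simp
qed

lemma prod_le_power_of_card_le:
  fixes g :: "'a \<Rightarrow> real"
  assumes "finite S" "card S \<le> m" "1 \<le> B" "\<And>l. l \<in> S \<Longrightarrow> 0 \<le> g l \<and> g l \<le> B"
  shows "(\<Prod>l\<in>S. g l) \<le> B ^ m"
proof -
  have "(\<Prod>l\<in>S. g l) \<le> B ^ card S"
    using prod_mono[of S g "\<lambda>_. B"] assms(4) by simp
  also have "\<dots> \<le> B ^ m"
    using assms(2,3) by (rule power_increasing)
  finally show ?thesis .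
qed

section \<open>Rationals over a common denominator\<close>

definition lin_comb_num :: "nat \<Rightarrow> (nat \<Rightarrow> int) \<Rightarrow> (nat \<Rightarrow> int) \<Rightarrow> (nat \<Rightarrow> int) \<Rightarrow> int" where
  "lin_comb_num n a e f = (\<Sum>j<n. a j * e j * (\<Prod>l\<in>{..<n} - {j}. f l))"

lemma lin_comb_num_eq:
  fixes a e f :: "nat \<Rightarrow> int" and q :: int
  assumes "q \<noteq> 0" and f: "\<And>j. j < n \<Longrightarrow> f j \<noteq> 0"
  shows "(\<Sum>j<n. of_int (a j) / of_int q * (of_int (e j) / of_int (f j)))
    = (of_int (lin_comb_num n a e f) / of_int (q * (\<Prod>j<n. f j)) :: real)"
proof -
  have "of_int (a j) / of_int q * (of_int (e j) / of_int (f j))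
      = of_int (a j * e j * (\<Prod>l\<in>{..<n} - {j}. f l)) / (of_int (q * (\<Prod>j<n. f j)) :: real)"
    if j: "j < n" for j
  proof -
    have "(\<Prod>j<n. f j) = f j * (\<Prod>l\<in>{..<n} - {j}. f l)"
      using j by (subst prod.remove[of _ j]) auto
    moreover have "(\<Prod>l\<in>{..<n} - {j}. f l) \<noteq> 0" using f by simp
    ultimately show ?thesis using assms(1) f[OF j] by (simp add: field_simps)
  qed
  then show ?thesis
    unfolding lin_comb_num_def of_int_sum sum_divide_distrib by (intro sum.cong) auto
qed

lemma abs_lin_comb_num_le:
  fixes a e f :: "nat \<Rightarrow> int"
  assumes R: "1 \<le> R" "real n \<le> R"
    and a: "\<And>j. j < n \<Longrightarrow> \<bar>real_of_int (a j)\<bar> \<le> R ^ m"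
    and e: "\<And>j. j < n \<Longrightarrow> \<bar>real_of_int (e j)\<bar> \<le> R"
    and f: "\<And>j. j < n \<Longrightarrow> 0 < f j \<and> real_of_int (f j) \<le> R"
  shows "\<bar>real_of_int (lin_comb_num n a e f)\<bar> \<le> R ^ (m + n + 2)"
proof -
  have "\<bar>real_of_int (a j * e j * (\<Prod>l\<in>{..<n} - {j}. f l))\<bar> \<le> R ^ m * R * R ^ n" if "j < n" for j
  proof -
    have "(\<Prod>l\<in>{..<n} - {j}. real_of_int (f l)) \<le> R ^ n"
      using f R by (intro prod_le_power_of_card_le) (auto simp: less_imp_le card_Diff_subset_Int)
    moreover have "0 \<le> (\<Prod>l\<in>{..<n} - {j}. real_of_int (f l))"
      using f by (intro prod_nonneg) (auto simp: less_imp_le)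
    moreover have "\<bar>real_of_int (a j) * real_of_int (e j)\<bar> \<le> R ^ m * R"
      unfolding abs_mult using a[OF that] e[OF that] R by (intro mult_mono) auto
    ultimately show ?thesis
      unfolding of_int_mult of_int_prod abs_mult[of "_ * _"] using R
      by (intro mult_mono) auto
  qed
  then have "\<bar>real_of_int (lin_comb_num n a e f)\<bar> \<le> real n * (R ^ m * R * R ^ n)"
    unfolding lin_comb_num_def of_int_sum
    by (intro order_trans[OF sum_abs] sum_bounded_above[of "{..<n}", simplified]) auto
  also have "\<dots> \<le> R * (R ^ m * R * R ^ n)"
    using R by (intro mult_right_mono) auto
  also have "\<dots> = R ^ (m + n + 2)"
    by (simp add: power_add mult_ac)
  finally show ?thesis .
qed

definition cd_rational_bounded :: "real set \<Rightarrow> real \<Rightarrow> bool" where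
  "cd_rational_bounded S M \<longleftrightarrow> (\<exists>q::int. q > 0 \<and> real_of_int q \<le> M \<and>
      (\<forall>x\<in>S. \<exists>a::int. \<bar>real_of_int a\<bar> \<le> M \<and> x = of_int a / of_int q))"

lemma cd_rational_bits_if_bounded:
  assumes "cd_rational_bounded S M" "M < 2 powr b"
  shows "cd_rational_bits S b"
proof -
  obtain q where q: "q > 0" "real_of_int q \<le> M"
    and S: "\<forall>x\<in>S. \<exists>a::int. \<bar>real_of_int a\<bar> \<le> M \<and> x = of_int a / of_int q"
    using assms(1) unfolding cd_rational_bounded_def by blast
  have fits: "fits_bits z b" if "\<bar>real_of_int z\<bar> \<le> M" for z :: int
    using that assms(2) unfolding fits_bits_def by simp
  show ?thesis
    unfolding cd_rational_bits_def using q S fits by (metis abs_of_pos of_int_0_less_iff)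
qed

lemma lin_comb_pair_eq:
  fixes a b e f e' f' :: "nat \<Rightarrow> int" and q :: int
  assumes "q \<noteq> 0" "\<And>j. j < n \<Longrightarrow> f j \<noteq> 0" "\<And>j. j < n \<Longrightarrow> f' j \<noteq> 0"
  shows "(\<Sum>j<n. of_int (a j) / of_int q * (of_int (e j) / of_int (f j)))
      + (\<Sum>j<n. of_int (b j) / of_int q * (of_int (e' j) / of_int (f' j)))
    = (of_int (lin_comb_num n a e f * (\<Prod>j<n. f' j) + lin_comb_num n b e' f' * (\<Prod>j<n. f j))
      / of_int (q * (\<Prod>j<n. f j) * (\<Prod>j<n. f' j)) :: real)"
proof -
  have nonzero: "real_of_int q \<noteq> 0" "(\<Prod>j<n. real_of_int (f j)) \<noteq> 0" "(\<Prod>j<n. real_of_int (f' j)) \<noteq> 0"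
    using assms by auto
  have A: "(\<Sum>j<n. of_int (a j) / of_int q * (of_int (e j) / of_int (f j)))
      = (of_int (lin_comb_num n a e f) / of_int (q * (\<Prod>j<n. f j)) :: real)"
    by (rule lin_comb_num_eq[OF assms(1,2)])
  have B: "(\<Sum>j<n. of_int (b j) / of_int q * (of_int (e' j) / of_int (f' j)))
      = (of_int (lin_comb_num n b e' f') / of_int (q * (\<Prod>j<n. f' j)) :: real)"
    by (rule lin_comb_num_eq[OF assms(1,3)])
  show ?thesis
    unfolding A B using nonzero by (simp add: field_simps)
qed

lemma prod_pos_le_power:
  fixes g :: "nat \<Rightarrow> int"
  assumes "1 \<le> R" and g: "\<And>j. j < n \<Longrightarrow> 0 < g j \<and> real_of_int (g j) \<le> R"
  shows "0 < (\<Prod>j<n. g j)" "real_of_int (\<Prod>j<n. g j) \<le> R ^ n"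
proof -
  show "0 < (\<Prod>j<n. g j)" using g by (intro prod_pos) auto
  have "0 \<le> real_of_int (g j) \<and> real_of_int (g j) \<le> R" if "j \<in> {..<n}" for j
    using g[of j] that by auto
  then show "real_of_int (\<Prod>j<n. g j) \<le> R ^ n"
    unfolding of_int_prod using assms(1) by (intro prod_le_power_of_card_le) auto
qed

lemma abs_lin_comb_pair_num_le:
  fixes a b e f e' f' :: "nat \<Rightarrow> int"
  assumes R: "2 \<le> R" "real n \<le> R"
    and ab: "\<And>j. j < n \<Longrightarrow> \<bar>real_of_int (a j)\<bar> \<le> R ^ m \<and> \<bar>real_of_int (b j)\<bar> \<le> R ^ m"
    and ef: "\<And>j. j < n \<Longrightarrow> \<bar>real_of_int (e j)\<bar> \<le> R \<and> 0 < f j \<and> real_of_int (f j) \<le> R"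
    and ef': "\<And>j. j < n \<Longrightarrow> \<bar>real_of_int (e' j)\<bar> \<le> R \<and> 0 < f' j \<and> real_of_int (f' j) \<le> R"
  shows "\<bar>real_of_int (lin_comb_num n a e f * (\<Prod>j<n. f' j) + lin_comb_num n b e' f' * (\<Prod>j<n. f j))\<bar>
    \<le> R ^ (m + 2 * n + 3)"
proof -
  let ?A = "lin_comb_num n a e f" and ?B = "lin_comb_num n b e' f'"
  let ?F = "\<Prod>j<n. f j" and ?F' = "\<Prod>j<n. f' j"
  have F: "0 \<le> real_of_int ?F" "real_of_int ?F \<le> R ^ n"
    and F': "0 \<le> real_of_int ?F'" "real_of_int ?F' \<le> R ^ n"
    using prod_pos_le_power[of R n f] prod_pos_le_power[of R n f'] R ef ef'
    by (auto simp del: of_int_prod)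
  have A: "\<bar>real_of_int ?A\<bar> \<le> R ^ (m + n + 2)" and B: "\<bar>real_of_int ?B\<bar> \<le> R ^ (m + n + 2)"
    using R ab ef ef' by (intro abs_lin_comb_num_le; force)+
  have "\<bar>real_of_int (?A * ?F' + ?B * ?F)\<bar> \<le> \<bar>real_of_int ?A\<bar> * real_of_int ?F' + \<bar>real_of_int ?B\<bar> * real_of_int ?F"
    using abs_triangle_ineq[of "real_of_int (?A * ?F')" "real_of_int (?B * ?F)"] F F'
    by (simp only: of_int_add abs_mult abs_of_nonneg of_int_mult)
  also have "\<dots> \<le> R ^ (m + n + 2) * R ^ n + R ^ (m + n + 2) * R ^ n"
    using A B F F' by (intro add_mono mult_mono) auto
  also have "\<dots> \<le> R * (R ^ (m + n + 2) * R ^ n)"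
    using R by (simp add: mult_right_mono)
  also have "\<dots> = R ^ (m + 2 * n + 3)"
    by (simp only: power_add[symmetric] power_Suc[symmetric]) (rule arg_cong[of _ _ "power R"], simp)
  finally show ?thesis .
qed

lemma cd_rational_bounded_lin_comb:
  fixes a b :: "nat \<Rightarrow> nat \<Rightarrow> int" and e f e' f' :: "nat \<Rightarrow> int" and q :: int
  assumes R: "2 \<le> R" "real n \<le> R"
    and q: "0 < q" "real_of_int q \<le> R ^ m"
    and ab: "\<And>i j. i \<in> I \<Longrightarrow> j < n \<Longrightarrow> \<bar>real_of_int (a i j)\<bar> \<le> R ^ m \<and> \<bar>real_of_int (b i j)\<bar> \<le> R ^ m"
    and ef: "\<And>j. j < n \<Longrightarrow> \<bar>real_of_int (e j)\<bar> \<le> R \<and> 0 < f j \<and> real_of_int (f j) \<le> R"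
    and ef': "\<And>j. j < n \<Longrightarrow> \<bar>real_of_int (e' j)\<bar> \<le> R \<and> 0 < f' j \<and> real_of_int (f' j) \<le> R"
  shows "cd_rational_bounded
    {(\<Sum>j<n. of_int (a i j) / of_int q * (of_int (e j) / of_int (f j)))
      + (\<Sum>j<n. of_int (b i j) / of_int q * (of_int (e' j) / of_int (f' j))) | i. i \<in> I}
    (R ^ (m + 2 * n + 3))"
  unfolding cd_rational_bounded_def
proof (rule exI[of _ "q * (\<Prod>j<n. f j) * (\<Prod>j<n. f' j)"], intro conjI ballI)
  let ?F = "\<Prod>j<n. f j" and ?F' = "\<Prod>j<n. f' j"
  have F: "0 < ?F" "real_of_int ?F \<le> R ^ n" and F': "0 < ?F'" "real_of_int ?F' \<le> R ^ n"
    using prod_pos_le_power[of R n f] prod_pos_le_power[of R n f'] R ef ef' by auto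
  show "0 < q * ?F * ?F'" using q F F' by simp
  have "real_of_int (q * ?F * ?F') \<le> R ^ m * R ^ n * R ^ n"
    unfolding of_int_mult using q F F' R by (intro mult_mono) (auto simp del: of_int_prod)
  also have "\<dots> \<le> R ^ (m + 2 * n + 3)"
    using R by (simp only: power_add[symmetric]) (rule power_increasing, simp_all)
  finally show "real_of_int (q * ?F * ?F') \<le> R ^ (m + 2 * n + 3)" .
next
  fix x :: real assume "x \<in> {(\<Sum>j<n. of_int (a i j) / of_int q * (of_int (e j) / of_int (f j)))
    + (\<Sum>j<n. of_int (b i j) / of_int q * (of_int (e' j) / of_int (f' j))) | i. i \<in> I}"
  then obtain i where i: "i \<in> I" and x: "x = (\<Sum>j<n. of_int (a i j) / of_int q * (of_int (e j) / of_int (f j)))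
    + (\<Sum>j<n. of_int (b i j) / of_int q * (of_int (e' j) / of_int (f' j)))" by blast
  let ?a = "lin_comb_num n (a i) e f * (\<Prod>j<n. f' j) + lin_comb_num n (b i) e' f' * (\<Prod>j<n. f j)"
  have "\<bar>real_of_int ?a\<bar> \<le> R ^ (m + 2 * n + 3)"
    using R ab[OF i] ef ef' by (rule abs_lin_comb_pair_num_le)
  moreover have "x = of_int ?a / of_int (q * (\<Prod>j<n. f j) * (\<Prod>j<n. f' j))"
    unfolding x by (rule lin_comb_pair_eq) (use q ef ef' in force)+
  ultimately show "\<exists>a. \<bar>real_of_int a\<bar> \<le> R ^ (m + 2 * n + 3)
      \<and> x = of_int a / of_int (q * (\<Prod>j<n. f j) * (\<Prod>j<n. f' j))"
    by blast
qed

lemma rat_over_bits_choice: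
  assumes "\<forall>i<n. rat_over_bits (x i) b"
  obtains a q :: "nat \<Rightarrow> int" where
    "\<And>i. i < n \<Longrightarrow> fits_bits (a i) b \<and> fits_bits (q i) b \<and> q i > 0 \<and> x i = of_int (a i) / of_int (q i)"
proof -
  have "\<forall>i. \<exists>aq::int \<times> int. i < n \<longrightarrow> fits_bits (fst aq) b \<and> fits_bits (snd aq) b \<and> snd aq > 0
      \<and> x i = of_int (fst aq) / of_int (snd aq)"
    using assms unfolding rat_over_bits_def by fastforce
  then obtain g where "\<forall>i. i < n \<longrightarrow> fits_bits (fst (g i)) b \<and> fits_bits (snd (g i)) b \<and> snd (g i) > 0
      \<and> x i = of_int (fst (g i)) / of_int (snd (g i))"
    by metis
  then show ?thesis by (intro that[of "\<lambda>i. fst (g i)" "\<lambda>i. snd (g i)"]) auto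
qed

section \<open>Consensus dynamics on the network\<close>

locale flocking_network =
  fixes n :: nat and E :: "nat \<Rightarrow> nat \<Rightarrow> bool" and c :: "nat \<Rightarrow> real"
  assumes undirected: "undirected_graph n E" and connected: "graph_connected n E"
    and c_pos: "\<And>i. i < n \<Longrightarrow> c i > 0"
    and c_degree_less_1: "\<And>i. i < n \<Longrightarrow> c i * real (degree n E i) < 1"
begin

definition nbrs :: "nat \<Rightarrow> nat set" where "nbrs i = {j. j < n \<and> E i j}"

definition lap :: "(nat \<Rightarrow> real) \<Rightarrow> nat \<Rightarrow> real" where
  "lap y i = (\<Sum>j\<in>nbrs i. y i - y j)"

definition energy :: "(nat \<Rightarrow> real) \<Rightarrow> real" where
  "energy y = (\<Sum>i<n. (y i)^2 / c i)"

definition mass :: "(nat \<Rightarrow> real) \<Rightarrow> real" where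
  "mass y = (\<Sum>i<n. y i / c i)"

lemma E_sym: "E i j \<Longrightarrow> E j i"
  using undirected unfolding undirected_graph_def by blast

lemma E_irrefl: "\<not> E i i"
  using undirected unfolding undirected_graph_def by blast

lemma finite_nbrs [simp]: "finite (nbrs i)"
  unfolding nbrs_def by auto

lemma card_nbrs: "card (nbrs i) = degree n E i"
  by (simp add: nbrs_def Defs.degree_def)

lemma sum_nbrs: "(\<Sum>j\<in>nbrs i. f j) = (\<Sum>j<n. if E i j then f j else 0)"
  by (simp add: nbrs_def sum.inter_filter[symmetric] lessThan_def conj_commute)

lemma lap_eq_sum: "lap y i = (\<Sum>j<n. if E i j then y i - y j else 0)"
  unfolding lap_def sum_nbrs ..

lemma sum_lap: "(\<Sum>i<n. lap y i) = 0"
proof -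
  let ?e = "\<lambda>i j. if E i j then y i - y j else (0::real)"
  have "(\<Sum>i<n. \<Sum>j<n. ?e i j) = (\<Sum>j<n. \<Sum>i<n. - ?e j i)"
    by (subst sum.swap) (intro sum.cong refl, auto intro: E_sym)
  then show ?thesis unfolding lap_eq_sum by (simp add: sum_negf)
qed

lemma sum_mult_lap: "(\<Sum>i<n. y i * lap y i) = (\<Sum>i<n. \<Sum>j\<in>nbrs i. (y i - y j)^2) / 2"
proof -
  let ?f = "\<lambda>i j. if E i j then y i * (y i - y j) else (0::real)"
  have lhs: "(\<Sum>i<n. y i * lap y i) = (\<Sum>i<n. \<Sum>j<n. ?f i j)"
    unfolding lap_eq_sum by (simp add: sum_distrib_left if_distrib cong: if_cong)
  have "(\<Sum>i<n. \<Sum>j<n. ?f i j) + (\<Sum>i<n. \<Sum>j<n. ?f j i)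
      = (\<Sum>i<n. \<Sum>j<n. if E i j then (y i - y j)^2 else 0)"
    unfolding sum.distrib[symmetric]
    by (intro sum.cong refl) (auto intro: E_sym simp: power2_eq_square algebra_simps)
  then show ?thesis
    using sum.swap[of ?f "{..<n}" "{..<n}"] unfolding lhs sum_nbrs by simp
qed

lemma lap_sq_le: "(lap y i)^2 \<le> real (degree n E i) * (\<Sum>j\<in>nbrs i. (y i - y j)^2)"
  unfolding lap_def card_nbrs[symmetric] by (rule sum_squared_le_card_sum_squares) simp

text \<open>One step \<open>y' = y - C L y\<close> lowers the energy \<open>y\<^sup>T C\<^sup>-\<^sup>1 y\<close> by exactly
  \<open>2 y\<^sup>T L y - (L y)\<^sup>T C (L y)\<close>; Cauchy--Schwarz and \<open>c\<^sub>i d\<^sub>i < 1\<close> bound this below edge by edge.\<close>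
lemma energy_decrease:
  assumes step: "\<And>i. i < n \<Longrightarrow> y' i = y i - c i * lap y i"
  shows "(\<Sum>i<n. (1 - c i * real (degree n E i)) * (\<Sum>j\<in>nbrs i. (y i - y j)^2))
           \<le> energy y - energy y'"
proof -
  have "energy y' = (\<Sum>i<n. (y i)^2 / c i - 2 * (y i * lap y i) + c i * (lap y i)^2)"
    unfolding energy_def
  proof (intro sum.cong refl)
    fix i assume "i \<in> {..<n}"
    then have "c i \<noteq> 0" using c_pos by force
    then show "(y' i)^2 / c i = (y i)^2 / c i - 2 * (y i * lap y i) + c i * (lap y i)^2"
      unfolding step[of i, OF lessThan_iff[THEN iffD1, OF \<open>i \<in> {..<n}\<close>]]
      by (simp add: field_simps power2_eq_square)
  qed
  then have "energy y - energy y'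
      = (\<Sum>i<n. \<Sum>j\<in>nbrs i. (y i - y j)^2) - (\<Sum>i<n. c i * (lap y i)^2)"
    unfolding energy_def using sum_mult_lap[of y]
    by (simp add: sum.distrib sum_subtractf sum_distrib_left[symmetric])
  moreover have "(\<Sum>i<n. c i * (lap y i)^2)
      \<le> (\<Sum>i<n. c i * real (degree n E i) * (\<Sum>j\<in>nbrs i. (y i - y j)^2))"
    using lap_sq_le c_pos by (intro sum_mono) (simp add: mult.assoc mult_left_mono less_imp_le)
  ultimately show ?thesis by (simp add: algebra_simps sum_subtractf)
qed

lemma energy_decrease_edge:
  assumes step: "\<And>i. i < n \<Longrightarrow> y' i = y i - c i * lap y i" and "a < n" "b < n" "E a b"
  shows "(1 - c a * real (degree n E a)) * (y a - y b)^2 \<le> energy y - energy y'"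
proof -
  let ?h = "\<lambda>i. (1 - c i * real (degree n E i)) * (\<Sum>j\<in>nbrs i. (y i - y j)^2)"
  have "b \<in> nbrs a" using assms unfolding nbrs_def by auto
  then have "(y a - y b)^2 \<le> (\<Sum>j\<in>nbrs a. (y a - y j)^2)"
    by (intro member_le_sum) auto
  then have "(1 - c a * real (degree n E a)) * (y a - y b)^2 \<le> ?h a"
    using c_degree_less_1[OF \<open>a < n\<close>] by (intro mult_left_mono) auto
  also have "?h a \<le> (\<Sum>i<n. ?h i)"
    using c_degree_less_1 \<open>a < n\<close>
    by (intro member_le_sum mult_nonneg_nonneg sum_nonneg) (auto simp: less_imp_le)
  also have "\<dots> \<le> energy y - energy y'" by (rule energy_decrease[OF step])
  finally show ?thesis .
qed

lemma mass_step:
  assumes step: "\<And>i. i < n \<Longrightarrow> y' i = y i - c i * lap y i"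
  shows "mass y' = mass y"
proof -
  have "mass y' = (\<Sum>i<n. y i / c i - lap y i)"
    unfolding mass_def using step c_pos by (intro sum.cong refl) (force simp: field_simps)
  then show ?thesis unfolding mass_def by (simp add: sum_subtractf sum_lap)
qed

lemma mass_iterate:
  assumes step: "\<And>t i. i < n \<Longrightarrow> z (Suc t) i = z t i - c i * lap (z t) i"
  shows "mass (z t) = mass (z 0)"
  by (induction t) (simp_all add: mass_step[OF step])

lemma energy_nonneg: "0 \<le> energy y"
  unfolding energy_def using c_pos by (intro sum_nonneg) (auto simp: less_imp_le)

lemma sum_inv_c_pos: "n > 0 \<Longrightarrow> (\<Sum>k<n. 1 / c k) > 0"
  using c_pos by (intro sum_pos) auto

lemma sum_stat_dist: "n > 0 \<Longrightarrow> (\<Sum>j<n. stat_dist n c j) = 1"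
  unfolding stat_dist_def sum_divide_distrib[symmetric] using sum_inv_c_pos by simp

lemma sum_stat_dist_mult: "(\<Sum>j<n. stat_dist n c j * y j) = mass y / (\<Sum>k<n. 1 / c k)"
  unfolding stat_dist_def mass_def sum_divide_distrib by (intro sum.cong refl) simp

lemma connected_induct [consumes 2, case_names step]:
  assumes "a < n" "b < n"
    and "\<And>i j. i < n \<Longrightarrow> j < n \<Longrightarrow> E i j \<Longrightarrow> R a i \<Longrightarrow> R a j"
    and "R a a"
  shows "R a b"
proof -
  have "(\<lambda>i j. i < n \<and> j < n \<and> E i j)\<^sup>*\<^sup>* a b"
    using connected assms(1,2) unfolding graph_connected_def by blast
  then show ?thesis by (induction rule: rtranclp_induct) (use assms(3,4) in blast)+
qed

text \<open>The energy decreases along a trajectory, so its decrements tend to 0, and by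
  \<open>energy_decrease_edge\<close> they dominate the squared differences along edges.\<close>
lemma trajectory_edge_tendsto_0:
  assumes step: "\<And>t i. i < n \<Longrightarrow> z (Suc t) i = z t i - c i * lap (z t) i"
    and ab: "a < n" "b < n" "E a b"
  shows "(\<lambda>t. z t a - z t b) \<longlonglongrightarrow> 0"
proof -
  have "decseq (\<lambda>t. energy (z t))"
  proof (rule decseq_SucI)
    fix t
    have "0 \<le> (\<Sum>i<n. (1 - c i * real (degree n E i)) * (\<Sum>j\<in>nbrs i. (z t i - z t j)^2))"
      using c_degree_less_1 by (intro sum_nonneg mult_nonneg_nonneg) (auto simp: less_imp_le)
    with energy_decrease[OF step, of t] show "energy (z (Suc t)) \<le> energy (z t)" by simp
  qed
  then obtain l where "(\<lambda>t. energy (z t)) \<longlonglongrightarrow> l"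
    using decseq_convergent energy_nonneg by blast
  then have decrement: "(\<lambda>t. energy (z t) - energy (z (Suc t))) \<longlonglongrightarrow> 0"
    using tendsto_diff LIMSEQ_Suc by fastforce
  define \<kappa> where "\<kappa> = 1 - c a * real (degree n E a)"
  have "\<kappa> > 0" using c_degree_less_1[OF \<open>a < n\<close>] unfolding \<kappa>_def by simp
  have le: "(z t a - z t b)^2 \<le> (energy (z t) - energy (z (Suc t))) / \<kappa>" for t
    using energy_decrease_edge[OF step ab, of t] \<open>\<kappa> > 0\<close> unfolding \<kappa>_def[symmetric]
    by (simp add: pos_le_divide_eq mult.commute)
  have "(\<lambda>t. (energy (z t) - energy (z (Suc t))) / \<kappa>) \<longlonglongrightarrow> 0"
    using tendsto_divide_zero[OF decrement] .
  then have "(\<lambda>t. (z t a - z t b)^2) \<longlonglongrightarrow> 0"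
    by (rule tendsto_sandwich[rotated 2, OF tendsto_const]) (use le in \<open>auto intro: always_eventually\<close>)
  then have "(\<lambda>t. sqrt ((z t a - z t b)^2)) \<longlonglongrightarrow> sqrt 0"
    by (rule tendsto_real_sqrt)
  then show ?thesis by (simp add: tendsto_rabs_zero_iff)
qed

text \<open>Consensus: by connectivity all differences tend to 0, and mass 0 pins the common
  value to 0, since \<open>z\<^sub>i = \<Sum>\<^sub>j \<pi>\<^sub>j (z\<^sub>i - z\<^sub>j)\<close> when \<open>\<Sum>\<^sub>j \<pi>\<^sub>j z\<^sub>j = 0\<close>.\<close>
lemma trajectory_tendsto_0:
  assumes step: "\<And>t i. i < n \<Longrightarrow> z (Suc t) i = z t i - c i * lap (z t) i"
    and mass0: "mass (z 0) = 0" and i: "i < n"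
  shows "(\<lambda>t. z t i) \<longlonglongrightarrow> 0"
proof -
  have path: "(\<lambda>t. z t i - z t j) \<longlonglongrightarrow> 0" if "j < n" for j
    using i that
  proof (induction rule: connected_induct)
    case (step j k)
    then have "(\<lambda>t. (z t i - z t j) + (z t j - z t k)) \<longlonglongrightarrow> 0 + 0"
      using trajectory_edge_tendsto_0[of z, OF assms(1)] by (intro tendsto_add) auto
    then show ?case by simp
  qed simp
  have "z t i = (\<Sum>j<n. stat_dist n c j * (z t i - z t j))" for t
  proof -
    have "(\<Sum>j<n. stat_dist n c j * (z t i - z t j))
        = (\<Sum>j<n. stat_dist n c j) * z t i - mass (z t) / (\<Sum>k<n. 1 / c k)"
      by (simp add: right_diff_distrib sum_subtractf sum_distrib_right sum_stat_dist_mult)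
    then show ?thesis
      using sum_stat_dist i mass_iterate[of z, OF step, of t] mass0 by simp
  qed
  moreover have "(\<lambda>t. \<Sum>j<n. stat_dist n c j * (z t i - z t j)) \<longlonglongrightarrow> (\<Sum>j<n. stat_dist n c j * 0)"
    by (intro tendsto_sum tendsto_mult tendsto_const path) simp
  ultimately show ?thesis by simp
qed

subsection \<open>The limit \<open>\<Gamma>\<close>\<close>

abbreviation "Lap \<equiv> laplacian n E"
abbreviation "P \<equiv> trans_mat n E c"

lemma Lap_carrier: "Lap \<in> carrier_mat n n"
  unfolding laplacian_def by simp

lemma P_carrier: "P \<in> carrier_mat n n"
  unfolding trans_mat_def diag_mat_def laplacian_def carrier_mat_def by simp

lemma Lap_entry:
  "i < n \<Longrightarrow> k < n \<Longrightarrow>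
     Lap $$ (i,k) = (if i = k then real (degree n E i) else 0) - (if E i k then 1 else 0)"
  unfolding laplacian_def using E_irrefl by auto

lemma P_entry:
  assumes "i < n" "k < n"
  shows "P $$ (i,k) = (if i = k then 1 else 0) - c i * Lap $$ (i,k)"
proof -
  have "(diag_mat n c * Lap) $$ (i,k) = (\<Sum>l<n. (if i = l then c i else 0) * Lap $$ (l,k))"
    using assms Lap_carrier by (subst mat_mult_entry_sum[of _ n]) (auto simp: diag_mat_def)
  also have "\<dots> = (\<Sum>l<n. if i = l then c i * Lap $$ (i,k) else 0)"
    by (intro sum.cong) auto
  also have "\<dots> = c i * Lap $$ (i,k)"
    using assms by simp
  finally show ?thesis
    unfolding trans_mat_def using assms Lap_carrier by (simp add: diag_mat_def)
qed

lemma Lap_mult: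
  assumes "i < n"
  shows "(\<Sum>k<n. Lap $$ (i,k) * y k) = lap y i"
proof -
  have "(\<Sum>k<n. Lap $$ (i,k) * y k)
      = (\<Sum>k<n. (if i = k then real (degree n E i) * y k else 0) - (if E i k then y k else 0))"
    using assms by (intro sum.cong refl) (simp add: Lap_entry left_diff_distrib)
  also have "\<dots> = real (degree n E i) * y i - (\<Sum>k<n. if E i k then y k else 0)"
    using assms by (simp add: sum_subtractf)
  also have "real (degree n E i) * y i = (\<Sum>k<n. if E i k then y i else 0)"
    using sum_nbrs[of "\<lambda>_. y i" i] by (simp add: card_nbrs)
  finally show ?thesis
    unfolding lap_eq_sum by (simp add: sum_subtractf[symmetric] if_distrib cong: if_cong)
qed

lemma P_mult:
  assumes "i < n"
  shows "(\<Sum>k<n. P $$ (i,k) * y k) = y i - c i * lap y i"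
proof -
  have "(\<Sum>k<n. P $$ (i,k) * y k)
      = (\<Sum>k<n. (if i = k then y k else 0) - c i * (Lap $$ (i,k) * y k))"
    using assms by (intro sum.cong refl) (simp add: P_entry algebra_simps)
  also have "\<dots> = y i - c i * (\<Sum>k<n. Lap $$ (i,k) * y k)"
    using assms by (simp add: sum_subtractf sum_distrib_left)
  finally show ?thesis using Lap_mult[OF assms] by simp
qed

lemma P_row_sum: "i < n \<Longrightarrow> (\<Sum>k<n. P $$ (i,k)) = 1"
  using P_mult[of i "\<lambda>_. 1"] by (simp add: lap_def)

definition deviation :: "nat \<Rightarrow> nat \<Rightarrow> nat \<Rightarrow> real" where
  "deviation j t i = (P ^\<^sub>m t) $$ (i,j) - stat_dist n c j"

lemma deviation_Suc:
  assumes "j < n" "i < n"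
  shows "deviation j (Suc t) i = deviation j t i - c i * lap (deviation j t) i"
proof -
  have "deviation j (Suc t) i
      = (\<Sum>k<n. P $$ (i,k) * (P ^\<^sub>m t) $$ (k,j)) - (\<Sum>k<n. P $$ (i,k)) * stat_dist n c j"
    unfolding deviation_def pow_mat_Suc_left[OF P_carrier] P_row_sum[OF assms(2)]
    using assms P_carrier by (subst mat_mult_entry_sum[of _ n]) auto
  also have "\<dots> = (\<Sum>k<n. P $$ (i,k) * deviation j t k)"
    unfolding deviation_def by (simp add: sum_distrib_right sum_subtractf right_diff_distrib)
  finally show ?thesis using P_mult[OF assms(2)] by simp
qed

lemma deviation_0: "i < n \<Longrightarrow> j < n \<Longrightarrow> deviation j 0 i = (if i = j then 1 else 0) - stat_dist n c j"
  unfolding deviation_def using P_carrier by auto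

lemma mass_deviation_0:
  assumes "j < n"
  shows "mass (deviation j 0) = 0"
proof -
  have "mass (deviation j 0)
      = (\<Sum>i<n. (if i = j then 1 / c i else 0) - stat_dist n c j * (1 / c i))"
    unfolding mass_def using assms by (intro sum.cong refl) (simp add: deviation_0 diff_divide_distrib)
  also have "\<dots> = 1 / c j - stat_dist n c j * (\<Sum>i<n. 1 / c i)"
    using assms by (simp add: sum_subtractf sum_distrib_left)
  finally show ?thesis
    using assms sum_inv_c_pos by (simp add: stat_dist_def)
qed

lemma deviation_tendsto_0: "i < n \<Longrightarrow> j < n \<Longrightarrow> (\<lambda>t. deviation j t i) \<longlonglongrightarrow> 0"
  by (rule trajectory_tendsto_0[OF deviation_Suc mass_deviation_0])

lemma gamma_seq_eq_sum_deviation: "gamma_seq n E c i j t = (\<Sum>s<t. deviation j s i)"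
  unfolding gamma_seq_def deviation_def by (simp add: sum_subtractf)

text \<open>\<open>L + 1 (C\<^sup>-\<^sup>1 1)\<^sup>T\<close>: the Laplacian made invertible by adding the conserved mass.\<close>
definition aug_lap :: "real mat" where
  "aug_lap = mat n n (\<lambda>(i,k). Lap $$ (i,k) + 1 / c k)"

lemma aug_lap_carrier: "aug_lap \<in> carrier_mat n n"
  unfolding aug_lap_def by simp

lemma aug_lap_mult: "i < n \<Longrightarrow> (\<Sum>k<n. aug_lap $$ (i,k) * y k) = lap y i + mass y"
  unfolding aug_lap_def mass_def by (simp add: distrib_right sum.distrib Lap_mult)

lemma lap_eq_0_imp_const:
  assumes lap0: "\<And>i. i < n \<Longrightarrow> lap y i = 0" and "a < n" "b < n"
  shows "y b = y a"
proof -
  have "(\<Sum>i<n. \<Sum>j\<in>nbrs i. (y i - y j)^2) = 0"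
    using sum_mult_lap[of y] lap0 by simp
  then have "(y i - y j)^2 = 0" if "i < n" "j \<in> nbrs i" for i j
    using that by (simp add: sum_nonneg_eq_0_iff sum_nonneg)
  then have edge: "y j = y i" if "i < n" "j < n" "E i j" for i j
    using that by (simp add: nbrs_def)
  from \<open>a < n\<close> \<open>b < n\<close> show ?thesis
  proof (induction rule: connected_induct)
    case (step i j)
    then show ?case using edge[of i j] by simp
  qed simp
qed

lemma lap_plus_mass_eq_0_imp_0:
  assumes "n > 0" and eq: "\<And>i. i < n \<Longrightarrow> lap y i + mass y = 0" and "k < n"
  shows "y k = 0"
proof -
  have "(\<Sum>i<n. lap y i + mass y) = 0" using eq by simp
  then have "real n * mass y = 0"
    by (simp add: sum.distrib sum_lap)
  then have "mass y = 0" using assms(1) by simp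
  then have const: "y l = y 0" if "l < n" for l
    using eq lap_eq_0_imp_const[of y 0 l] assms(1) that by simp
  have "mass y = (\<Sum>l<n. y 0 * (1 / c l))"
    unfolding mass_def
  proof (intro sum.cong refl)
    fix l assume "l \<in> {..<n}"
    then show "y l / c l = y 0 * (1 / c l)" using const[of l] by simp
  qed
  then have "y 0 * (\<Sum>l<n. 1 / c l) = 0"
    using \<open>mass y = 0\<close> by (simp add: sum_distrib_left)
  then show ?thesis
    using const[OF \<open>k < n\<close>] sum_inv_c_pos[OF assms(1)] by simp
qed

lemma det_aug_lap_nonzero:
  assumes "n > 0"
  shows "det aug_lap \<noteq> 0"
proof
  assume "det aug_lap = 0"
  then obtain v where v: "v \<in> carrier_vec n" "v \<noteq> 0\<^sub>v n" "aug_lap *\<^sub>v v = 0\<^sub>v n"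
    using det_0_iff_vec_prod_zero_field[OF aug_lap_carrier] by blast
  have "lap (\<lambda>k. v $ k) i + mass (\<lambda>k. v $ k) = 0" if "i < n" for i
  proof -
    have "(aug_lap *\<^sub>v v) $ i = 0" using v that by simp
    then show ?thesis
      using mat_vec_entry_sum[OF aug_lap_carrier v(1) that] aug_lap_mult[OF that] by simp
  qed
  then have "v $ k = 0" if "k < n" for k
    using lap_plus_mass_eq_0_imp_0[OF assms, of "\<lambda>k. v $ k"] that by blast
  then have "v = 0\<^sub>v n"
    using v(1) by (intro eq_vecI) auto
  with v(2) show False ..
qed

definition aug_lap_inv :: "real mat" where
  "aug_lap_inv = (SOME B. B \<in> carrier_mat n n \<and> B * aug_lap = 1\<^sub>m n \<and> aug_lap * B = 1\<^sub>m n)"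

lemma aug_lap_inv:
  assumes "n > 0"
  shows "aug_lap_inv \<in> carrier_mat n n" "aug_lap_inv * aug_lap = 1\<^sub>m n" "aug_lap * aug_lap_inv = 1\<^sub>m n"
proof -
  have "aug_lap \<in> Units (ring_mat TYPE(real) n ())"
    by (rule det_non_zero_imp_unit[OF aug_lap_carrier det_aug_lap_nonzero[OF assms]])
  then have "\<exists>B. B \<in> carrier_mat n n \<and> B * aug_lap = 1\<^sub>m n \<and> aug_lap * B = 1\<^sub>m n"
    unfolding Units_def ring_mat_def by auto
  from someI_ex[OF this]
  show "aug_lap_inv \<in> carrier_mat n n" "aug_lap_inv * aug_lap = 1\<^sub>m n" "aug_lap * aug_lap_inv = 1\<^sub>m n"
    unfolding aug_lap_inv_def by auto
qed

lemma aug_lap_inv_mult: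
  assumes "n > 0" "i < n"
  shows "(\<Sum>k<n. aug_lap_inv $$ (i,k) * (\<Sum>l<n. aug_lap $$ (k,l) * y l)) = y i"
proof -
  have "aug_lap_inv *\<^sub>v (aug_lap *\<^sub>v vec n y) = vec n y"
    using aug_lap_inv[OF assms(1)] aug_lap_carrier
    by (simp add: assoc_mult_mat_vec[symmetric, of _ n n _ n])
  from arg_cong[OF this, of "\<lambda>v. v $ i"] show ?thesis
    using assms(2) aug_lap_inv(1)[OF assms(1)] aug_lap_carrier
    by (simp add: mult_mat_vec_sum)
qed

text \<open>Column \<open>j\<close> of \<open>\<Gamma>\<close> solves \<open>L \<gamma> + mass \<gamma> 1 = C\<^sup>-\<^sup>1 (e\<^sub>j - \<pi>\<^sub>j 1)\<close>.\<close>
definition gamma_rhs :: "nat \<Rightarrow> nat \<Rightarrow> real" where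
  "gamma_rhs j i = deviation j 0 i / c i"

definition Gamma :: "nat \<Rightarrow> nat \<Rightarrow> real" where
  "Gamma i j = (aug_lap_inv *\<^sub>v vec n (gamma_rhs j)) $ i"

lemma aug_lap_Gamma:
  assumes "n > 0" "i < n"
  shows "(\<Sum>k<n. aug_lap $$ (i,k) * Gamma k j) = gamma_rhs j i"
proof -
  have "aug_lap *\<^sub>v (aug_lap_inv *\<^sub>v vec n (gamma_rhs j)) = vec n (gamma_rhs j)"
    using aug_lap_inv[OF assms(1)] aug_lap_carrier
    by (simp add: assoc_mult_mat_vec[symmetric, of _ n n _ n])
  from arg_cong[OF this, of "\<lambda>v. v $ i"] show ?thesis
    using assms(2) aug_lap_inv(1)[OF assms(1)] aug_lap_carrier
    by (simp add: mult_mat_vec_sum Gamma_def)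
qed

lemma mass_Gamma:
  assumes "n > 0" "j < n"
  shows "mass (\<lambda>k. Gamma k j) = 0"
proof -
  have "(\<Sum>i<n. lap (\<lambda>k. Gamma k j) i + mass (\<lambda>k. Gamma k j)) = (\<Sum>i<n. gamma_rhs j i)"
    using aug_lap_Gamma[OF assms(1)] aug_lap_mult by simp
  also have "\<dots> = 0"
    using mass_deviation_0[OF assms(2)] unfolding gamma_rhs_def mass_def .
  finally show ?thesis
    using assms(1) by (simp add: sum.distrib sum_lap)
qed

lemma lap_Gamma:
  assumes "n > 0" "j < n" "i < n"
  shows "lap (\<lambda>k. Gamma k j) i = gamma_rhs j i"
  using aug_lap_Gamma[OF assms(1,3), of j] aug_lap_mult[OF assms(3)] mass_Gamma[OF assms(1,2)]
  by simp

lemma lap_sum: "lap (\<lambda>k. \<Sum>s\<in>S. f s k) i = (\<Sum>s\<in>S. lap (f s) i)"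
  unfolding lap_def sum_subtractf[symmetric] by (rule sum.swap)

lemma lap_diff: "lap (\<lambda>k. f k - g k) i = lap f i - lap g i"
  unfolding lap_def by (simp add: sum_subtractf[symmetric] algebra_simps)

lemma mass_diff: "mass (\<lambda>k. f k - g k) = mass f - mass g"
  unfolding mass_def by (simp add: sum_subtractf[symmetric] diff_divide_distrib)

lemma mass_sum: "mass (\<lambda>k. \<Sum>s\<in>S. f s k) = (\<Sum>s\<in>S. mass (f s))"
  unfolding mass_def sum_divide_distrib by (rule sum.swap)

text \<open>The partial sums \<open>S\<^sub>t\<close> of the deviations satisfy \<open>C L S\<^sub>t = z\<^sub>0 - z\<^sub>t\<close> by telescoping
  and have mass 0, so the augmented Laplacian maps \<open>S\<^sub>t - \<Gamma>\<close> to \<open>-C\<^sup>-\<^sup>1 z\<^sub>t\<close>.\<close>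
lemma aug_lap_partial_sum_deviation:
  assumes "n > 0" "j < n" "k < n"
  shows "(\<Sum>l<n. aug_lap $$ (k,l) * ((\<Sum>s<t. deviation j s l) - Gamma l j)) = - deviation j t k / c k"
proof -
  let ?D = "\<lambda>l. (\<Sum>s<t. deviation j s l) - Gamma l j"
  have "c k * lap (\<lambda>l. \<Sum>s<t. deviation j s l) k = (\<Sum>s<t. deviation j s k - deviation j (Suc s) k)"
    unfolding lap_sum sum_distrib_left using deviation_Suc[OF assms(2,3)] by simp
  also have "\<dots> = deviation j 0 k - deviation j t k"
    by (rule sum_lessThan_telescope')
  finally have "lap (\<lambda>l. \<Sum>s<t. deviation j s l) k = (deviation j 0 k - deviation j t k) / c k"
    using c_pos[OF assms(3)] by (simp add: field_simps)
  then have "lap ?D k = - deviation j t k / c k"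
    unfolding lap_diff lap_Gamma[OF assms] gamma_rhs_def by (simp add: diff_divide_distrib)
  moreover have "mass ?D = 0"
    using mass_Gamma[OF assms(1,2)] mass_iterate[of "deviation j", OF deviation_Suc[OF assms(2)]]
      mass_deviation_0[OF assms(2)]
    unfolding mass_diff mass_sum by simp
  ultimately show ?thesis
    using aug_lap_mult[OF assms(3), of ?D] by simp
qed

lemma gamma_seq_tendsto_Gamma:
  assumes "n > 0" "i < n" "j < n"
  shows "gamma_seq n E c i j \<longlonglongrightarrow> Gamma i j"
proof -
  let ?D = "\<lambda>t l. (\<Sum>s<t. deviation j s l) - Gamma l j"
  have "?D t i = (\<Sum>k<n. aug_lap_inv $$ (i,k) * (- deviation j t k / c k))" for t
    using aug_lap_inv_mult[OF assms(1,2), of "?D t"] aug_lap_partial_sum_deviation[OF assms(1,3)]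
    by simp
  moreover have "(\<lambda>t. \<Sum>k<n. aug_lap_inv $$ (i,k) * (- deviation j t k / c k))
      \<longlonglongrightarrow> (\<Sum>k<n. aug_lap_inv $$ (i,k) * (- 0 / c k))"
    by (intro tendsto_sum tendsto_mult tendsto_const tendsto_divide tendsto_minus
        deviation_tendsto_0 assms) (use c_pos in \<open>auto simp: less_imp_neq[symmetric]\<close>)
  ultimately have "(\<lambda>t. ?D t i) \<longlonglongrightarrow> 0"
    by simp
  then have "(\<lambda>t. ?D t i + Gamma i j) \<longlonglongrightarrow> 0 + Gamma i j"
    by (rule tendsto_add) (rule tendsto_const)
  then show ?thesis
    unfolding gamma_seq_eq_sum_deviation by simp
qed

end

section \<open>Rationality of \<open>\<Gamma>\<close> and of \<open>x\<^sup>r\<close>\<close>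

text \<open>With \<open>c\<^sub>i = \<alpha>\<^sub>i / \<beta>\<^sub>i\<close>, scaling column \<open>k\<close> of the augmented Laplacian by \<open>\<alpha>\<^sub>k\<close> gives
  an integer matrix, and Cramer's rule expresses \<open>\<Gamma>\<close> over the common denominator \<open>common_den\<close>.\<close>
locale rational_flocking_network = flocking_network +
  fixes \<alpha> \<beta> :: "nat \<Rightarrow> int"
  assumes \<alpha>_pos: "\<And>i. i < n \<Longrightarrow> \<alpha> i > 0" and \<beta>_pos: "\<And>i. i < n \<Longrightarrow> \<beta> i > 0"
    and c_eq: "\<And>i. i < n \<Longrightarrow> c i = of_int (\<alpha> i) / of_int (\<beta> i)"
    and n_pos: "n > 0"
begin

definition \<alpha>_prod :: int where "\<alpha>_prod = (\<Prod>l<n. \<alpha> l)"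

definition \<alpha>_prod_except :: "nat \<Rightarrow> int" where
  "\<alpha>_prod_except i = (\<Prod>l\<in>{..<n} - {i}. \<alpha> l)"

text \<open>\<open>\<Sum>\<^sub>k 1 / c\<^sub>k = inv_c_sum_num / \<alpha>_prod\<close>.\<close>
definition inv_c_sum_num :: int where
  "inv_c_sum_num = (\<Sum>k<n. \<beta> k * \<alpha>_prod_except k)"

text \<open>\<open>\<delta>\<^sub>i\<^sub>j - \<pi>\<^sub>j = proj_coeff i j / inv_c_sum_num\<close>.\<close>
definition proj_coeff :: "nat \<Rightarrow> nat \<Rightarrow> int" where
  "proj_coeff i j = (if i = j then inv_c_sum_num else 0) - \<beta> j * \<alpha>_prod_except j"

definition aug_lap_int :: "int mat" where
  "aug_lap_int = mat n n (\<lambda>(i,k). \<alpha> k * ((if i = k then int (degree n E i) else 0)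
      - (if E i k then 1 else 0)) + \<beta> k)"

definition gamma_rhs_int :: "nat \<Rightarrow> nat \<Rightarrow> int" where
  "gamma_rhs_int j i = \<beta> i * \<alpha>_prod_except i * proj_coeff i j"

definition cramer_mat :: "nat \<Rightarrow> nat \<Rightarrow> int mat" where
  "cramer_mat j i = replace_col aug_lap_int (vec n (gamma_rhs_int j)) i"

definition common_den :: int where
  "common_den = \<alpha>_prod * inv_c_sum_num * \<bar>det aug_lap_int\<bar>"

definition gamma_num :: "nat \<Rightarrow> nat \<Rightarrow> int" where
  "gamma_num i j = \<alpha> i * det (cramer_mat j i) * sgn (det aug_lap_int)"

definition proj_num :: "nat \<Rightarrow> nat \<Rightarrow> int" where
  "proj_num i j = proj_coeff i j * \<alpha>_prod * \<bar>det aug_lap_int\<bar>"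

lemma \<alpha>_prod_split: "i < n \<Longrightarrow> \<alpha>_prod = \<alpha> i * \<alpha>_prod_except i"
  unfolding \<alpha>_prod_def \<alpha>_prod_except_def by (subst prod.remove[of _ i]) auto

lemma \<alpha>_prod_except_pos: "\<alpha>_prod_except i > 0"
  unfolding \<alpha>_prod_except_def using \<alpha>_pos by (intro prod_pos) auto

lemma \<alpha>_prod_pos: "\<alpha>_prod > 0"
  unfolding \<alpha>_prod_def using \<alpha>_pos by (intro prod_pos) auto

lemma inv_c_sum_num_pos: "inv_c_sum_num > 0"
  unfolding inv_c_sum_num_def using n_pos \<beta>_pos \<alpha>_prod_except_pos by (intro sum_pos) auto

lemma inv_c_eq: "i < n \<Longrightarrow> 1 / c i = of_int (\<beta> i * \<alpha>_prod_except i) / of_int \<alpha>_prod"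
  using c_eq[of i] \<alpha>_prod_split[of i] \<alpha>_prod_except_pos[of i] by simp

lemma stat_dist_eq: "j < n \<Longrightarrow> stat_dist n c j = of_int (\<beta> j * \<alpha>_prod_except j) / of_int inv_c_sum_num"
  unfolding stat_dist_def inv_c_sum_num_def using inv_c_eq \<alpha>_prod_pos
  by (simp add: sum_divide_distrib[symmetric])

lemma proj_coeff_eq:
  "i < n \<Longrightarrow> j < n \<Longrightarrow> (if i = j then 1 else 0) - stat_dist n c j = of_int (proj_coeff i j) / of_int inv_c_sum_num"
  using stat_dist_eq[of j] inv_c_sum_num_pos by (auto simp: proj_coeff_def field_simps)

lemma gamma_rhs_int_eq:
  assumes "i < n" "j < n"
  shows "of_int (\<alpha>_prod * inv_c_sum_num) * gamma_rhs j i = of_int (gamma_rhs_int j i)"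
proof -
  have "gamma_rhs j i = of_int (proj_coeff i j) / of_int inv_c_sum_num
      * (of_int (\<beta> i * \<alpha>_prod_except i) / of_int \<alpha>_prod)"
    unfolding gamma_rhs_def deviation_0[OF assms] proj_coeff_eq[OF assms] inv_c_eq[OF assms(1), symmetric]
    by simp
  then show ?thesis
    unfolding gamma_rhs_int_def using \<alpha>_prod_pos inv_c_sum_num_pos by (simp add: field_simps)
qed

lemma aug_lap_int_carrier: "aug_lap_int \<in> carrier_mat n n"
  unfolding aug_lap_int_def by simp

lemma aug_lap_int_entry:
  "i < n \<Longrightarrow> k < n \<Longrightarrow> of_int (aug_lap_int $$ (i,k)) = of_int (\<alpha> k) * aug_lap $$ (i,k)"
  unfolding aug_lap_int_def aug_lap_def using Lap_entry[of i k] c_eq[of k] \<alpha>_pos[of k]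
  by (simp add: distrib_left)

lemma map_aug_lap_int: "map_mat real_of_int aug_lap_int = aug_lap * diag_mat n (\<lambda>k. of_int (\<alpha> k))"
proof (rule eq_matI)
  fix i k assume "i < dim_row (aug_lap * diag_mat n (\<lambda>k. of_int (\<alpha> k)))"
    "k < dim_col (aug_lap * diag_mat n (\<lambda>k. of_int (\<alpha> k)))"
  then have ik: "i < n" "k < n" using aug_lap_carrier by (auto simp: diag_mat_def)
  have "(aug_lap * diag_mat n (\<lambda>k. of_int (\<alpha> k))) $$ (i,k)
      = (\<Sum>l<n. aug_lap $$ (i,l) * diag_mat n (\<lambda>k. of_int (\<alpha> k)) $$ (l,k))"
    using ik aug_lap_carrier by (intro mat_mult_entry_sum) (auto simp: diag_mat_def)
  also have "\<dots> = (\<Sum>l<n. if l = k then aug_lap $$ (i,k) * of_int (\<alpha> k) else 0)"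
    using ik by (intro sum.cong refl) (simp add: diag_mat_def)
  finally show "map_mat real_of_int aug_lap_int $$ (i,k) = (aug_lap * diag_mat n (\<lambda>k. of_int (\<alpha> k))) $$ (i,k)"
    using ik aug_lap_int_carrier aug_lap_int_entry by (simp add: mult.commute)
qed (use aug_lap_carrier aug_lap_int_carrier in \<open>auto simp: diag_mat_def\<close>)

lemma det_aug_lap_int_nonzero: "det aug_lap_int \<noteq> 0"
proof -
  have diag: "diag_mat n (\<lambda>k. of_int (\<alpha> k)) \<in> carrier_mat n n"
    unfolding diag_mat_def by simp
  have "det (diag_mat n (\<lambda>k. of_int (\<alpha> k))) = (\<Prod>i = 0..<n. of_int (\<alpha> i) :: real)"
    using det_upper_triangular[OF _ diag]
    unfolding prod_list_diag_prod upper_triangular_def diag_mat_def by simp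
  moreover have "(\<Prod>i = 0..<n. real_of_int (\<alpha> i)) \<noteq> 0"
    using \<alpha>_pos by (simp add: less_imp_neq[symmetric])
  ultimately have "det (map_mat real_of_int aug_lap_int) \<noteq> 0"
    unfolding map_aug_lap_int det_mult[OF aug_lap_carrier diag] using det_aug_lap_nonzero[OF n_pos] by simp
  then show ?thesis by (simp add: of_int_hom.hom_det)
qed

lemma common_den_pos: "common_den > 0"
  unfolding common_den_def using \<alpha>_prod_pos inv_c_sum_num_pos det_aug_lap_int_nonzero by simp

text \<open>Cramer's rule for the solution \<open>x\<^sub>k = \<alpha>_prod inv_c_sum_num \<Gamma>\<^sub>k\<^sub>j / \<alpha>\<^sub>k\<close> of the integer system.\<close>
lemma Gamma_cramer:
  assumes i: "i < n" and j: "j < n"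
  shows "Gamma i j * of_int (\<alpha>_prod * inv_c_sum_num * det aug_lap_int)
    = of_int (\<alpha> i * det (cramer_mat j i))"
proof -
  let ?A = "map_mat real_of_int aug_lap_int"
  define x where "x = vec n (\<lambda>k. of_int (\<alpha>_prod * inv_c_sum_num) * Gamma k j / of_int (\<alpha> k))"
  have x: "x \<in> carrier_vec n" unfolding x_def by simp
  have "?A *\<^sub>v x = map_vec real_of_int (vec n (gamma_rhs_int j))"
  proof (rule eq_vecI)
    fix l assume "l < dim_vec (map_vec real_of_int (vec n (gamma_rhs_int j)))"
    then have l: "l < n" by simp
    have "(?A *\<^sub>v x) $ l = (\<Sum>k<n. of_int (aug_lap_int $$ (l,k)) * x $ k)"
      using l aug_lap_int_carrier x by (subst mat_vec_entry_sum[of _ n]) auto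
    also have "\<dots> = (\<Sum>k<n. of_int (\<alpha>_prod * inv_c_sum_num) * (aug_lap $$ (l,k) * Gamma k j))"
    proof (intro sum.cong refl)
      fix k assume "k \<in> {..<n}"
      then show "of_int (aug_lap_int $$ (l,k)) * x $ k
          = of_int (\<alpha>_prod * inv_c_sum_num) * (aug_lap $$ (l,k) * Gamma k j)"
        using aug_lap_int_entry[OF l, of k] \<alpha>_pos[of k] by (simp add: x_def)
    qed
    also have "\<dots> = of_int (\<alpha>_prod * inv_c_sum_num) * gamma_rhs j l"
      by (simp add: sum_distrib_left[symmetric] aug_lap_Gamma[OF n_pos l])
    finally show "(?A *\<^sub>v x) $ l = map_vec real_of_int (vec n (gamma_rhs_int j)) $ l"
      using l gamma_rhs_int_eq[OF l j] by simp
  qed (use aug_lap_int_carrier in simp)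
  then have "replace_col ?A (?A *\<^sub>v x) i = map_mat real_of_int (cramer_mat j i)"
    unfolding cramer_mat_def replace_col_def using aug_lap_int_carrier by (intro eq_matI) auto
  moreover have "det (replace_col ?A (?A *\<^sub>v x) i) = x $ i * det ?A"
    by (rule cramer_lemma_mat[OF _ x i]) (use aug_lap_int_carrier in auto)
  ultimately have "real_of_int (det (cramer_mat j i)) = x $ i * of_int (det aug_lap_int)"
    by (simp add: of_int_hom.hom_det)
  then show ?thesis
    unfolding x_def using i \<alpha>_pos[OF i] by (simp add: field_simps)
qed

lemma Gamma_eq:
  assumes "i < n" "j < n"
  shows "Gamma i j = of_int (gamma_num i j) / of_int common_den"
proof -
  have "Gamma i j * of_int common_den
      = Gamma i j * of_int (\<alpha>_prod * inv_c_sum_num * det aug_lap_int) * of_int (sgn (det aug_lap_int))"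
    unfolding common_den_def by (simp add: abs_sgn mult_ac)
  also have "\<dots> = of_int (gamma_num i j)"
    unfolding Gamma_cramer[OF assms] gamma_num_def by simp
  finally show ?thesis
    using common_den_pos by (simp add: field_simps)
qed

lemma proj_eq:
  "i < n \<Longrightarrow> j < n \<Longrightarrow> (if i = j then 1 else 0) - stat_dist n c j = of_int (proj_num i j) / of_int common_den"
  using proj_coeff_eq[of i j] \<alpha>_prod_pos det_aug_lap_int_nonzero
  by (simp add: common_den_def proj_num_def)


lemma x_rest_eq_lin_comb:
  assumes i: "i < n"
    and x0: "\<And>j. j < n \<Longrightarrow> x0 j k = of_int (e j) / of_int (f j)"
    and v1: "\<And>j. j < n \<Longrightarrow> v1 j k = of_int (e' j) / of_int (f' j)"
  shows "x_rest n c Gamma x0 v1 i k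
      = (\<Sum>j<n. of_int (proj_num i j) / of_int common_den * (of_int (e j) / of_int (f j)))
      + (\<Sum>j<n. of_int (gamma_num i j) / of_int common_den * (of_int (e' j) / of_int (f' j)))"
  unfolding x_rest_def
proof (intro arg_cong2[of _ _ _ _ "(+)"] sum.cong refl)
  fix j assume "j \<in> {..<n}"
  then show "((if i = j then 1 else 0) - stat_dist n c j) * x0 j k
      = of_int (proj_num i j) / of_int common_den * (of_int (e j) / of_int (f j))"
    using proj_eq[OF i, of j] x0[of j] by simp
next
  fix j assume "j \<in> {..<n}"
  then show "Gamma i j * v1 j k = of_int (gamma_num i j) / of_int common_den * (of_int (e' j) / of_int (f' j))"
    using Gamma_eq[OF i, of j] v1[of j] by simp
qed

end

subsection \<open>Size bounds\<close>

locale bounded_rational_flocking_network = rational_flocking_network +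
  fixes B :: real
  assumes \<alpha>_le: "\<And>i. i < n \<Longrightarrow> real_of_int (\<alpha> i) \<le> B" and \<beta>_le: "\<And>i. i < n \<Longrightarrow> real_of_int (\<beta> i) \<le> B"
begin

definition entry_bound :: real where "entry_bound = 2 * real n * B"

lemma one_le_B: "1 \<le> B"
  using \<alpha>_le[OF n_pos] \<alpha>_pos[OF n_pos] by linarith

lemma one_le_n: "1 \<le> real n"
  using n_pos by simp

lemma B_le_entry_bound: "B \<le> entry_bound"
  unfolding entry_bound_def using one_le_B one_le_n by (simp add: mult_le_cancel_right1)

lemma one_le_entry_bound: "1 \<le> entry_bound"
  using B_le_entry_bound one_le_B by linarith

lemma two_le_entry_bound: "2 \<le> entry_bound"
  unfolding entry_bound_def using one_le_B one_le_n mult_mono[OF one_le_n one_le_B] by simp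

lemma n_le_entry_bound: "real n \<le> entry_bound"
  unfolding entry_bound_def using one_le_B one_le_n by (simp add: mult_le_cancel_right1)

lemma entry_bound_pos: "0 < entry_bound"
  using one_le_entry_bound by linarith

lemma entry_bound_pow_mono: "a \<le> b \<Longrightarrow> entry_bound ^ a \<le> entry_bound ^ b"
  using one_le_entry_bound by (rule power_increasing[rotated])

lemma n_B_pow_le: "1 \<le> k \<Longrightarrow> 2 * real n * B ^ k \<le> entry_bound ^ k"
proof -
  assume "1 \<le> k"
  then have "(2 * real n) ^ 1 \<le> (2 * real n) ^ k"
    using one_le_n by (intro power_increasing) auto
  then have "2 * real n * B ^ k \<le> (2 * real n) ^ k * B ^ k"
    using one_le_B by (intro mult_right_mono) auto
  then show ?thesis
    unfolding entry_bound_def by (simp add: power_mult_distrib)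
qed

lemma fact_le_entry_bound_pow: "fact n \<le> entry_bound ^ n"
proof -
  have "(fact n :: real) \<le> real n ^ n"
    using fact_le_power[of n] by (simp del: of_nat_power add: of_nat_power[symmetric])
  also have "\<dots> \<le> entry_bound ^ n"
    using n_le_entry_bound by (intro power_mono) auto
  finally show ?thesis .
qed

lemma \<alpha>_prod_le: "real_of_int \<alpha>_prod \<le> B ^ n"
  unfolding \<alpha>_prod_def of_int_prod
  using \<alpha>_le \<alpha>_pos one_le_B by (intro prod_le_power_of_card_le) (auto simp: less_imp_le)

lemma \<alpha>_prod_except_le: "real_of_int (\<alpha>_prod_except i) \<le> B ^ n"
  unfolding \<alpha>_prod_except_def of_int_prod using \<alpha>_le \<alpha>_pos one_le_B
  by (intro prod_le_power_of_card_le) (auto simp: less_imp_le card_Diff_subset_Int)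

lemma \<beta>_\<alpha>_prod_except_le: "i < n \<Longrightarrow> real_of_int (\<beta> i * \<alpha>_prod_except i) \<le> B ^ Suc n"
  using \<beta>_le[of i] \<alpha>_prod_except_le[of i] \<alpha>_prod_except_pos[of i] one_le_B
  by (simp add: mult_mono)

lemma inv_c_sum_num_le: "real_of_int inv_c_sum_num \<le> real n * B ^ Suc n"
proof -
  have "real_of_int inv_c_sum_num = (\<Sum>k<n. real_of_int (\<beta> k * \<alpha>_prod_except k))"
    unfolding inv_c_sum_num_def by simp
  also have "\<dots> \<le> (\<Sum>k<n. B ^ Suc n)"
    using \<beta>_\<alpha>_prod_except_le by (intro sum_mono) auto
  finally show ?thesis by simp
qed

lemma abs_proj_coeff_le:
  assumes j: "j < n"
  shows "\<bar>real_of_int (proj_coeff i j)\<bar> \<le> entry_bound ^ Suc n"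
proof -
  define b where "b = real_of_int (\<beta> j * \<alpha>_prod_except j)"
  have b: "0 \<le> b" "b \<le> B ^ Suc n"
    unfolding b_def using \<beta>_pos[OF j] \<alpha>_prod_except_pos[of j] \<beta>_\<alpha>_prod_except_le[OF j] by auto
  have "real_of_int (proj_coeff i j) = (if i = j then real_of_int inv_c_sum_num else 0) - b"
    unfolding proj_coeff_def b_def by simp
  then have "\<bar>real_of_int (proj_coeff i j)\<bar> \<le> \<bar>if i = j then real_of_int inv_c_sum_num else 0\<bar> + \<bar>b\<bar>"
    by (metis abs_triangle_ineq4)
  also have "\<dots> \<le> real n * B ^ Suc n + B ^ Suc n"
    using inv_c_sum_num_le inv_c_sum_num_pos b by (intro add_mono) auto
  also have "\<dots> \<le> real n * B ^ Suc n + real n * B ^ Suc n"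
    using mult_right_mono[OF one_le_n, of "B ^ Suc n"] one_le_B by simp
  also have "\<dots> = 2 * real n * B ^ Suc n"
    by simp
  also have "\<dots> \<le> entry_bound ^ Suc n"
    by (rule n_B_pow_le) simp
  finally show ?thesis .
qed

lemma abs_aug_lap_int_le:
  assumes "i < n" "k < n"
  shows "\<bar>real_of_int (aug_lap_int $$ (i,k))\<bar> \<le> entry_bound"
proof -
  have deg: "real (degree n E i) \<le> real n"
    using card_mono[of "{..<n}" "nbrs i"] by (auto simp: card_nbrs[symmetric] nbrs_def)
  define l where "l = (if i = k then int (degree n E i) else 0) - (if E i k then 1 else 0)"
  have l_le: "\<bar>real_of_int l\<bar> \<le> real n"
    unfolding l_def using deg one_le_n E_irrefl[of i] by auto
  have "\<bar>real_of_int (aug_lap_int $$ (i,k))\<bar> = \<bar>real_of_int (\<alpha> k) * real_of_int l + real_of_int (\<beta> k)\<bar>"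
    unfolding aug_lap_int_def l_def using assms by simp
  also have "\<dots> \<le> real_of_int (\<alpha> k) * \<bar>real_of_int l\<bar> + real_of_int (\<beta> k)"
    using \<alpha>_pos[OF assms(2)] \<beta>_pos[OF assms(2)]
      abs_triangle_ineq[of "real_of_int (\<alpha> k) * real_of_int l" "real_of_int (\<beta> k)"]
    by (simp add: abs_mult)
  also have "\<dots> \<le> real_of_int (\<alpha> k) * real n + real_of_int (\<beta> k)"
    using l_le \<alpha>_pos[OF assms(2)] by simp
  also have "\<dots> \<le> B * real n + B * real n"
  proof (rule add_mono)
    show "real_of_int (\<alpha> k) * real n \<le> B * real n"
      using \<alpha>_le[OF assms(2)] by (simp add: mult_right_mono)
    show "real_of_int (\<beta> k) \<le> B * real n"
    proof -
      have "B * 1 \<le> B * real n"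
        using one_le_n one_le_B by (intro mult_left_mono) auto
      then show ?thesis using \<beta>_le[OF assms(2)] by simp
    qed
  qed
  finally show ?thesis unfolding entry_bound_def by (simp add: mult_ac)
qed

lemma abs_det_aug_lap_int_le: "\<bar>real_of_int (det aug_lap_int)\<bar> \<le> entry_bound ^ (2 * n)"
proof -
  have "\<bar>det (map_mat real_of_int aug_lap_int)\<bar> \<le> fact n * (\<Prod>k<n. entry_bound)"
    using aug_lap_int_carrier abs_aug_lap_int_le by (intro abs_det_le_fact_prod) auto
  also have "\<dots> \<le> entry_bound ^ n * entry_bound ^ n"
    using fact_le_entry_bound_pow one_le_entry_bound by (simp add: mult_right_mono)
  finally show ?thesis by (simp add: of_int_hom.hom_det mult_2 power_add)
qed

lemma abs_det_cramer_mat_le: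
  assumes i: "i < n" and j: "j < n"
  shows "\<bar>real_of_int (det (cramer_mat j i))\<bar> \<le> entry_bound ^ (4 * n + 1)"
proof -
  define b where "b k = (if k = i then entry_bound ^ (2 * n + 2) else entry_bound)" for k
  have rhs_le: "\<bar>real_of_int (gamma_rhs_int j r)\<bar> \<le> entry_bound ^ (2 * n + 2)" if "r < n" for r
  proof -
    have "\<bar>real_of_int (gamma_rhs_int j r)\<bar> = real_of_int (\<beta> r * \<alpha>_prod_except r) * \<bar>real_of_int (proj_coeff r j)\<bar>"
      unfolding gamma_rhs_int_def using \<beta>_pos[OF that] \<alpha>_prod_except_pos[of r] by (simp add: abs_mult)
    also have "\<dots> \<le> entry_bound ^ Suc n * entry_bound ^ Suc n"
      using \<beta>_\<alpha>_prod_except_le[OF that] abs_proj_coeff_le[OF j, of r] power_mono[OF B_le_entry_bound, of "Suc n"]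
        one_le_B by (intro mult_mono) auto
    also have "\<dots> = entry_bound ^ (2 * n + 2)"
      by (simp only: power_add[symmetric]) (rule arg_cong[of _ _ "power entry_bound"], simp)
    finally show ?thesis .
  qed
  have carrier: "cramer_mat j i \<in> carrier_mat n n"
    unfolding cramer_mat_def replace_col_def using aug_lap_int_carrier by auto
  have "\<bar>det (map_mat real_of_int (cramer_mat j i))\<bar> \<le> fact n * (\<Prod>k<n. b k)"
    using carrier abs_aug_lap_int_le rhs_le aug_lap_int_carrier
    by (intro abs_det_le_fact_prod) (auto simp: cramer_mat_def replace_col_def b_def)
  also have "(\<Prod>k<n. b k) = entry_bound ^ (2 * n + 2) * entry_bound ^ (n - 1)"
    using i by (simp add: prod.remove[of _ i] b_def)
  also have "fact n * \<dots> \<le> entry_bound ^ n * (entry_bound ^ (2 * n + 2) * entry_bound ^ (n - 1))"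
    using fact_le_entry_bound_pow one_le_entry_bound by (intro mult_right_mono) auto
  also have "\<dots> = entry_bound ^ (4 * n + 1)"
    by (simp only: power_add[symmetric]) (rule arg_cong[of _ _ "power entry_bound"], use i in simp)
  finally show ?thesis by (simp add: of_int_hom.hom_det)
qed

lemma common_den_le: "real_of_int common_den \<le> entry_bound ^ (6 * n)"
proof -
  have "real_of_int common_den = real_of_int \<alpha>_prod * real_of_int inv_c_sum_num * \<bar>real_of_int (det aug_lap_int)\<bar>"
    unfolding common_den_def by simp
  also have "\<dots> \<le> entry_bound ^ n * entry_bound ^ Suc n * entry_bound ^ (2 * n)"
    using \<alpha>_prod_le power_mono[OF B_le_entry_bound, of n] one_le_B \<alpha>_prod_pos
      inv_c_sum_num_le n_B_pow_le[of "Suc n"] inv_c_sum_num_pos abs_det_aug_lap_int_le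
    by (intro mult_mono) auto
  also have "\<dots> \<le> entry_bound ^ (6 * n)"
    unfolding power_add[symmetric] using n_pos by (intro entry_bound_pow_mono) simp
  finally show ?thesis .
qed

lemma abs_gamma_num_le: "i < n \<Longrightarrow> j < n \<Longrightarrow> \<bar>real_of_int (gamma_num i j)\<bar> \<le> entry_bound ^ (6 * n)"
proof -
  assume ij: "i < n" "j < n"
  have "\<bar>real_of_int (gamma_num i j)\<bar> \<le> real_of_int (\<alpha> i) * \<bar>real_of_int (det (cramer_mat j i))\<bar>"
    unfolding gamma_num_def using \<alpha>_pos[OF ij(1)] by (auto simp: abs_mult sgn_if)
  also have "\<dots> \<le> entry_bound * entry_bound ^ (4 * n + 1)"
    using \<alpha>_le[OF ij(1)] B_le_entry_bound abs_det_cramer_mat_le[OF ij] one_le_entry_bound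
    by (intro mult_mono) auto
  also have "\<dots> \<le> entry_bound ^ (6 * n)"
    unfolding power_Suc[symmetric] using n_pos by (intro entry_bound_pow_mono) simp
  finally show ?thesis .
qed

lemma abs_proj_num_le: "j < n \<Longrightarrow> \<bar>real_of_int (proj_num i j)\<bar> \<le> entry_bound ^ (6 * n)"
proof -
  assume j: "j < n"
  have "\<bar>real_of_int (proj_num i j)\<bar>
      = \<bar>real_of_int (proj_coeff i j)\<bar> * real_of_int \<alpha>_prod * \<bar>real_of_int (det aug_lap_int)\<bar>"
    unfolding proj_num_def using \<alpha>_prod_pos by (simp add: abs_mult)
  also have "\<dots> \<le> entry_bound ^ Suc n * entry_bound ^ n * entry_bound ^ (2 * n)"
    using abs_proj_coeff_le[OF j] \<alpha>_prod_le power_mono[OF B_le_entry_bound, of n] one_le_B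
      \<alpha>_prod_pos abs_det_aug_lap_int_le entry_bound_pos
    by (intro mult_mono) auto
  also have "\<dots> \<le> entry_bound ^ (6 * n)"
    unfolding power_add[symmetric] using n_pos by (intro entry_bound_pow_mono) simp
  finally show ?thesis .
qed

lemma Gamma_cd_rational_bounded:
  "cd_rational_bounded {Gamma i j | i j. i < n \<and> j < n} (entry_bound ^ (6 * n))"
  unfolding cd_rational_bounded_def
  using common_den_pos common_den_le Gamma_eq abs_gamma_num_le by blast

lemma x_rest_cd_rational_bounded:
  assumes "\<forall>j<n. rat_over_bits (x0 j k) p \<and> rat_over_bits (v1 j k) p"
  shows "cd_rational_bounded {x_rest n c Gamma x0 v1 i k | i. i < n}
    ((entry_bound * 2 powr real p) ^ (8 * n + 3))"
proof -
  have "\<forall>j<n. rat_over_bits (x0 j k) p" "\<forall>j<n. rat_over_bits (v1 j k) p"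
    using assms by blast+
  obtain e f where
    ef: "\<And>j. j < n \<Longrightarrow> fits_bits (e j) p \<and> fits_bits (f j) p \<and> f j > 0 \<and> x0 j k = of_int (e j) / of_int (f j)"
    using \<open>\<forall>j<n. rat_over_bits (x0 j k) p\<close> by (rule rat_over_bits_choice) blast
  obtain e' f' where
    ef': "\<And>j. j < n \<Longrightarrow> fits_bits (e' j) p \<and> fits_bits (f' j) p \<and> f' j > 0 \<and> v1 j k = of_int (e' j) / of_int (f' j)"
    using \<open>\<forall>j<n. rat_over_bits (v1 j k) p\<close> by (rule rat_over_bits_choice) blast
  define R where "R = entry_bound * 2 powr real p"
  have "entry_bound * 1 \<le> R" "1 * 2 powr real p \<le> R"
    unfolding R_def using one_le_entry_bound ge_one_powr_ge_zero[of 2 "real p"]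
    by (intro mult_left_mono mult_right_mono; simp)+
  then have R: "2 \<le> R" "real n \<le> R" "entry_bound \<le> R" "2 powr real p \<le> R"
    using n_le_entry_bound two_le_entry_bound by auto
  have bits_le: "\<bar>real_of_int z\<bar> \<le> R" if "fits_bits z p" for z
    using that R(4) unfolding fits_bits_def by simp
  have entry_le: "\<bar>x\<bar> \<le> R ^ m" if "\<bar>x\<bar> \<le> entry_bound ^ m" for x m
    using that power_mono[OF R(3), of m] entry_bound_pos by linarith
  have "x_rest n c Gamma x0 v1 i k
      = (\<Sum>j<n. of_int (proj_num i j) / of_int common_den * (of_int (e j) / of_int (f j)))
      + (\<Sum>j<n. of_int (gamma_num i j) / of_int common_den * (of_int (e' j) / of_int (f' j)))" if "i < n" for i
    by (rule x_rest_eq_lin_comb[OF that]) (use ef ef' in blast)+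
  then have "{x_rest n c Gamma x0 v1 i k | i. i < n}
      = {(\<Sum>j<n. of_int (proj_num i j) / of_int common_den * (of_int (e j) / of_int (f j)))
      + (\<Sum>j<n. of_int (gamma_num i j) / of_int common_den * (of_int (e' j) / of_int (f' j))) | i. i \<in> {..<n}}"
    by (intro Collect_cong ex_cong1) auto
  also have "cd_rational_bounded \<dots> (R ^ (6 * n + 2 * n + 3))"
  proof (rule cd_rational_bounded_lin_comb)
    show "2 \<le> R" "real n \<le> R" "0 < common_den" by (fact R(1) R(2) common_den_pos)+
    show "real_of_int common_den \<le> R ^ (6 * n)"
      using entry_le[of "real_of_int common_den"] common_den_le common_den_pos by simp
    fix i j assume "i \<in> {..<n}" "j < n"
    then show "\<bar>real_of_int (proj_num i j)\<bar> \<le> R ^ (6 * n) \<and> \<bar>real_of_int (gamma_num i j)\<bar> \<le> R ^ (6 * n)"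
      using entry_le abs_proj_num_le abs_gamma_num_le by simp
  next
    fix j assume "j < n"
    then show "\<bar>real_of_int (e j)\<bar> \<le> R \<and> 0 < f j \<and> real_of_int (f j) \<le> R"
      "\<bar>real_of_int (e' j)\<bar> \<le> R \<and> 0 < f' j \<and> real_of_int (f' j) \<le> R"
      using ef ef' bits_le abs_le_D1 by blast+
  qed
  finally show ?thesis
    unfolding R_def by (simp add: algebra_simps)
qed

end

text \<open>With \<open>L = log\<^sub>2 n \<ge> 1\<close> the base equals \<open>2 powr (1 + L + c\<^sub>0 L + p)\<close> and
  \<open>1 + L + c\<^sub>0 L \<le> (2 + c\<^sub>0) L\<close>.\<close>
lemma power_bound_less_powr:
  fixes c0 :: real and n m p :: nat
  assumes "c0 > 0" "n \<ge> 2" "m \<le> 11 * n"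
  shows "(2 * real n * 2 powr (c0 * log 2 n) * 2 powr real p) ^ m
    < 2 powr (11 * (3 + c0) * (real n * log 2 n + real p * real n))"
proof -
  define L where "L = log 2 (real n)"
  have L: "1 \<le> L" unfolding L_def using assms(2) by simp
  have "2 * real n * 2 powr (c0 * L) * 2 powr real p = 2 powr (1 + L + c0 * L + real p)"
    using assms(2) by (simp add: L_def powr_add)
  then have "(2 * real n * 2 powr (c0 * L) * 2 powr real p) ^ m = 2 powr (real m * (1 + L + c0 * L + real p))"
    by (simp add: powr_realpow[symmetric] powr_powr mult.commute)
  also have "\<dots> < 2 powr (11 * (3 + c0) * (real n * L + real p * real n))"
  proof (rule powr_less_mono)
    have "real m * (1 + L + c0 * L + real p) \<le> real (11 * n) * ((2 + c0) * L + real p)"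
      using assms L by (intro mult_mono) (auto simp: algebra_simps)
    also have "\<dots> = 11 * (2 + c0) * (real n * L) + 11 * (real p * real n)"
      by (simp add: algebra_simps)
    also have "\<dots> < 11 * (3 + c0) * (real n * L) + 11 * (3 + c0) * (real p * real n)"
      using assms L by (intro add_less_le_mono mult_strict_right_mono mult_right_mono) auto
    also have "\<dots> = 11 * (3 + c0) * (real n * L + real p * real n)"
      by (simp add: algebra_simps)
    finally show "real m * (1 + L + c0 * L + real p) < 11 * (3 + c0) * (real n * L + real p * real n)" .
  qed simp
  finally show ?thesis unfolding L_def .
qed

lemma bounded_rational_flocking_network_of_bits:
  assumes "n > 0" "undirected_graph n E" "graph_connected n E"
    and c: "\<forall>i<n. c i > 0 \<and> rat_over_bits (c i) b \<and> c i * real (degree n E i) < 1"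
  obtains \<alpha> \<beta> where "bounded_rational_flocking_network n E c \<alpha> \<beta> (2 powr b)"
proof -
  have "\<forall>i<n. rat_over_bits (c i) b" using c by blast
  then obtain \<alpha> \<beta> :: "nat \<Rightarrow> int" where
    \<alpha>\<beta>: "\<And>i. i < n \<Longrightarrow> fits_bits (\<alpha> i) b \<and> fits_bits (\<beta> i) b \<and> \<beta> i > 0 \<and> c i = of_int (\<alpha> i) / of_int (\<beta> i)"
    by (rule rat_over_bits_choice) blast
  have bits_le: "real_of_int z \<le> 2 powr b" if "fits_bits z b" for z
    using that unfolding fits_bits_def by linarith
  have "bounded_rational_flocking_network n E c \<alpha> \<beta> (2 powr b)"
  proof unfold_locales
    fix i assume i: "i < n"
    have "0 < c i" using c i by blast
    then show "0 < \<alpha> i"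
      using \<alpha>\<beta>[OF i] by (simp add: zero_less_divide_iff)
    show "0 < c i" "c i * real (degree n E i) < 1" using c i by auto
    show "0 < \<beta> i" "c i = of_int (\<alpha> i) / of_int (\<beta> i)" using \<alpha>\<beta>[OF i] by auto
    show "of_int (\<alpha> i) \<le> 2 powr b" "of_int (\<beta> i) \<le> 2 powr b"
      using \<alpha>\<beta>[OF i] bits_le by auto
  qed (use assms in auto)
  then show ?thesis by (rule that)
qed

theorem lemma3p12:
  fixes c0 :: real
  assumes "c0 > 0"
  shows "\<exists>K::real. \<forall>(n::nat) (E::nat \<Rightarrow> nat \<Rightarrow> bool) (c::nat \<Rightarrow> real) (d::nat) (p::nat)
            (x0::nat \<Rightarrow> nat \<Rightarrow> real) (v1::nat \<Rightarrow> nat \<Rightarrow> real).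
     n \<ge> 2 \<longrightarrow> undirected_graph n E \<longrightarrow> graph_connected n E \<longrightarrow>
     (\<forall>i<n. c i > 0 \<and> rat_over_bits (c i) (c0 * log 2 n) \<and> c i * real (degree n E i) < 1) \<longrightarrow>
     p \<ge> 1 \<longrightarrow>
     (\<forall>i<n. \<forall>k<d. rat_over_bits (x0 i k) p \<and> rat_over_bits (v1 i k) p) \<longrightarrow>
     (\<exists>\<Gamma>::nat \<Rightarrow> nat \<Rightarrow> real.
        (\<forall>i<n. \<forall>j<n. gamma_seq n E c i j \<longlonglongrightarrow> \<Gamma> i j) \<and>
        cd_rational_bits {\<Gamma> i j | i j. i < n \<and> j < n} (K * (n * log 2 n)) \<and>
        (\<forall>k<d. cd_rational_bits {x_rest n c \<Gamma> x0 v1 i k | i. i < n}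
                         (K * (n * log 2 n + p * n))))"
proof (rule exI[of _ "11 * (3 + c0)"], intro allI impI)
  fix n :: nat and E :: "nat \<Rightarrow> nat \<Rightarrow> bool" and c :: "nat \<Rightarrow> real" and d p :: nat
    and x0 v1 :: "nat \<Rightarrow> nat \<Rightarrow> real"
  assume n: "n \<ge> 2" and graph: "undirected_graph n E" "graph_connected n E"
    and c: "\<forall>i<n. c i > 0 \<and> rat_over_bits (c i) (c0 * log 2 n) \<and> c i * real (degree n E i) < 1"
    and x0_v1: "\<forall>i<n. \<forall>k<d. rat_over_bits (x0 i k) p \<and> rat_over_bits (v1 i k) p"
  have "0 < n" using n by simp
  then obtain \<alpha> \<beta> where "bounded_rational_flocking_network n E c \<alpha> \<beta> (2 powr (c0 * log 2 n))"
    using graph c by (rule bounded_rational_flocking_network_of_bits)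
  then interpret F: bounded_rational_flocking_network n E c \<alpha> \<beta> "2 powr (c0 * log 2 n)" .
  have base: "F.entry_bound * 2 powr real q = 2 * real n * 2 powr (c0 * log 2 n) * 2 powr real q" for q
    unfolding F.entry_bound_def ..
  show "\<exists>\<Gamma>. (\<forall>i<n. \<forall>j<n. gamma_seq n E c i j \<longlonglongrightarrow> \<Gamma> i j) \<and>
      cd_rational_bits {\<Gamma> i j | i j. i < n \<and> j < n} (11 * (3 + c0) * (n * log 2 n)) \<and>
      (\<forall>k<d. cd_rational_bits {x_rest n c \<Gamma> x0 v1 i k | i. i < n} (11 * (3 + c0) * (n * log 2 n + p * n)))"
  proof (intro exI[of _ F.Gamma] conjI allI impI)
    show "gamma_seq n E c i j \<longlonglongrightarrow> F.Gamma i j" if "i < n" "j < n" for i j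
      using F.gamma_seq_tendsto_Gamma F.n_pos that by blast
    show "cd_rational_bits {F.Gamma i j | i j. i < n \<and> j < n} (11 * (3 + c0) * (n * log 2 n))"
      using F.Gamma_cd_rational_bounded power_bound_less_powr[OF assms n, of "6 * n" 0] base[of 0]
      by (intro cd_rational_bits_if_bounded) auto
    show "cd_rational_bits {x_rest n c F.Gamma x0 v1 i k | i. i < n} (11 * (3 + c0) * (n * log 2 n + p * n))"
      if "k < d" for k
      using F.x_rest_cd_rational_bounded[of x0 k p v1] x0_v1 that
        power_bound_less_powr[OF assms n, of "8 * n + 3" p] base[of p] n
      by (intro cd_rational_bits_if_bounded) auto
  qed
qed

end
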